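(* Let $G$ be a torsion-free abelian group, totally ordered compatibly with addition, in which every subset that is bounded below is well-ordered. Then for any strictly increasing sequence $(g_i)_{i\in\mathbb{N}_0}$ in $G$, there exists a sequence $(n_i)_{i\in\mathbb{N}_0}$ of positive integers such that $(g_{n_{i+1}}-g_{n_i})_{i\in\mathbb{N}_0}$ is strictly increasing.
   Context: A total order $\le$ on an abelian group $G$ is compatible with addition if $b\le c$ iff $b+d\le c+d$ for all $b,c,d\in G$. A subset is bounded below if it has a lower bound in $G$, and well-ordered if each nonempty subset has a least element. *)

theory Defs
  imports Main
begin

definition torsion_free_group :: "'a::ab_group_add itself \<Rightarrow> bool" where
  "torsion_free_group _ \<longleftrightarrow>
     (\<forall>(n::nat) (x::'a). n > 0 \<longrightarrow> (\<Sum>_\<in>{..<n}. x) = 0 \<longrightarrow> x = 0)"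

definition bounded_below_well_ordered :: "'a::linorder itself \<Rightarrow> bool" where
  "bounded_below_well_ordered _ \<longleftrightarrow>
     (\<forall>S::'a set. (\<exists>b. \<forall>s\<in>S. b \<le> s) \<longrightarrow>
        (\<forall>T. T \<subseteq> S \<longrightarrow> T \<noteq> {} \<longrightarrow> (\<exists>m\<in>T. \<forall>t\<in>T. m \<le> t)))"

end

theory Submission
  imports Defs
begin

text \<open>If bounded-below subsets are well-ordered, no strictly descending chain is bounded below.
  Applied to \<open>X - g i\<close>, this shows that a strictly increasing sequence \<open>g\<close> is unbounded above.
  Unboundedness lets us choose the indices recursively, taking \<open>n (i + 2)\<close> with
  \<open>g (n (i + 2)) > 2 g (n (i + 1)) - g (n i)\<close>, which says precisely that the gaps
  \<open>g (n (i + 1)) - g (n i)\<close> increase strictly.\<close>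

lemma bounded_below_well_orderedD:
  fixes S :: "'a::linorder set"
  assumes "bounded_below_well_ordered TYPE('a)" and "\<forall>s\<in>S. b \<le> s" and "S \<noteq> {}"
  shows "\<exists>m\<in>S. \<forall>s\<in>S. m \<le> s"
proof -
  from assms(1) have "(\<exists>b. \<forall>s\<in>S. b \<le> s) \<longrightarrow>
      (\<forall>T. T \<subseteq> S \<longrightarrow> T \<noteq> {} \<longrightarrow> (\<exists>m\<in>T. \<forall>t\<in>T. m \<le> t))"
    unfolding bounded_below_well_ordered_def by (rule spec)
  with assms(2,3) show ?thesis
    by blast
qed

lemma descending_chain_unbounded_below:
  fixes f :: "nat \<Rightarrow> 'a::linorder"
  assumes "bounded_below_well_ordered TYPE('a)"
    and descending: "\<And>i. f (Suc i) < f i"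
  shows "\<exists>i. f i < b"
proof (rule ccontr)
  assume "\<not> (\<exists>i. f i < b)"
  then have "\<forall>s\<in>range f. b \<le> s"
    by (auto simp: not_less)
  with assms(1) obtain m where "m \<in> range f" and least: "\<forall>t\<in>range f. m \<le> t"
    using bounded_below_well_orderedD by blast
  then obtain i where "m = f i"
    by blast
  with least have "f i \<le> f (Suc i)"
    by blast
  with descending[of i] show False
    by simp
qed

lemma strict_mono_unbounded_above:
  fixes g :: "nat \<Rightarrow> 'a::linordered_ab_group_add"
  assumes "bounded_below_well_ordered TYPE('a)" and "strict_mono g"
  shows "\<exists>j. X < g j"
proof -
  have "X - g (Suc i) < X - g i" for i
    using \<open>strict_mono g\<close> by (simp add: strict_mono_Suc_iff)
  then obtain j where "X - g j < 0"
    using descending_chain_unbounded_below[OF assms(1), of "\<lambda>i. X - g i"] by blast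
  then show ?thesis
    by auto
qed

definition two_step_recurrence :: "('a \<Rightarrow> 'a \<Rightarrow> 'a) \<Rightarrow> 'a \<Rightarrow> 'a \<Rightarrow> nat \<Rightarrow> 'a" where
  "two_step_recurrence f a b k = fst (((\<lambda>(x, y). (y, f x y)) ^^ k) (a, b))"

lemma two_step_recurrence_pair:
  "((\<lambda>(x, y). (y, f x y)) ^^ k) (a, b) =
     (two_step_recurrence f a b k, two_step_recurrence f a b (Suc k))"
proof (induction k)
  case 0
  show ?case
    by (simp add: two_step_recurrence_def)
next
  case (Suc k)
  then show ?case
    by (simp add: two_step_recurrence_def[of f a b "Suc (Suc k)"])
qed

lemma two_step_recurrence_0 [simp]: "two_step_recurrence f a b 0 = a"
  and two_step_recurrence_1 [simp]: "two_step_recurrence f a b (Suc 0) = b"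
  by (simp_all add: two_step_recurrence_def)

lemma two_step_recurrence_Suc_Suc [simp]:
  "two_step_recurrence f a b (Suc (Suc k)) =
     f (two_step_recurrence f a b k) (two_step_recurrence f a b (Suc k))"
proof -
  have "(two_step_recurrence f a b (Suc k), two_step_recurrence f a b (Suc (Suc k))) =
      ((\<lambda>(x, y). (y, f x y)) ^^ Suc k) (a, b)"
    by (rule two_step_recurrence_pair[symmetric])
  also have "\<dots> = (two_step_recurrence f a b (Suc k),
      f (two_step_recurrence f a b k) (two_step_recurrence f a b (Suc k)))"
    by (simp add: two_step_recurrence_pair)
  finally show ?thesis
    by simp
qed

lemma two_step_recurrence_in:
  assumes "a \<in> A" and "b \<in> A" and "\<And>x y. x \<in> A \<Longrightarrow> y \<in> A \<Longrightarrow> f x y \<in> A"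
  shows "two_step_recurrence f a b k \<in> A"
proof -
  have "two_step_recurrence f a b k \<in> A \<and> two_step_recurrence f a b (Suc k) \<in> A"
    using assms by (induction k) simp_all
  then show ?thesis ..
qed

lemma increasing_gaps_if_unbounded_above:
  fixes g :: "nat \<Rightarrow> 'a::linordered_ab_group_add"
  assumes unbounded: "\<And>X. \<exists>j. X < g j"
  shows "\<exists>n. (\<forall>i. n i > 0) \<and> strict_mono (\<lambda>i. g (n (Suc i)) - g (n i))"
proof -
  have next_exists: "\<exists>c. 0 < c \<and> g b - g a < g c - g b" for a b
  proof -
    \<comment> \<open>exceeding \<open>g 0\<close> as well excludes the index \<open>0\<close>\<close>
    obtain c where "max (g 0) (g b - g a + g b) < g c"
      using unbounded by blast
    then have "g 0 < g c" and "g b - g a + g b < g c"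
      by simp_all
    from \<open>g 0 < g c\<close> have "0 < c"
      by (metis gr0I order.irrefl)
    moreover from \<open>g b - g a + g b < g c\<close> have "g b - g a < g c - g b"
      by (simp only: less_diff_eq)
    ultimately show ?thesis
      by blast
  qed
  define next_index where "next_index a b = (SOME c. 0 < c \<and> g b - g a < g c - g b)" for a b
  have next_index: "0 < next_index a b \<and> g b - g a < g (next_index a b) - g b" for a b
    unfolding next_index_def by (rule someI_ex) (rule next_exists)
  define n where "n = two_step_recurrence next_index 1 1"
  have "n i \<in> {0<..}" for i
    unfolding n_def by (rule two_step_recurrence_in) (simp_all add: next_index)
  moreover have "g (n (Suc i)) - g (n i) < g (n (Suc (Suc i))) - g (n (Suc i))" for i
    using next_index by (simp add: n_def)
  ultimately show ?thesis
    by (auto simp: strict_mono_Suc_iff)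
qed

theorem lemma4p4:
  fixes g :: "nat \<Rightarrow> 'a::linordered_ab_group_add"
  assumes "torsion_free_group TYPE('a)"
    and "bounded_below_well_ordered TYPE('a)"
    and "strict_mono g"
  shows "\<exists>n :: nat \<Rightarrow> nat. (\<forall>i. n i > 0) \<and> strict_mono (\<lambda>i. g (n (Suc i)) - g (n i))"
  using strict_mono_unbounded_above[OF assms(2,3)]
  by (rule increasing_gaps_if_unbounded_above)

end
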